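(* Let $M$ be a matroid flock on a finite set $E$, let $\alpha,\beta\in\mathbb{Z}^E$ and let $I\subseteq E$. If $I\cap\mathrm{supp}(\beta-\alpha)=\emptyset$ and $\alpha\le\beta$ (coordinatewise), then $r_\alpha(I)\ge r_\beta(I)$.
   Context: $\mathrm{supp}(x):=\{i:x_i\neq0\}$. $e_i$ unit vectors, $\mathbf{1}$ the all-one vector in $\mathbb{Z}^E$. A matroid flock of rank $d$ on $E$ is a map $M$ assigning to each $\alpha\in\mathbb{Z}^E$ a matroid $M_\alpha$ on $E$ of rank $d$ with (MF1) $M_\alpha/i=M_{\alpha+e_i}\setminus i$ for all $\alpha$, $i\in E$ (contraction, deletion); and (MF2) $M_\alpha=M_{\alpha+\mathbf{1}}$ for all $\alpha$. $r_\alpha$ denotes the rank function of $M_\alpha$. *)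

theory Defs
  imports Main
begin

definition matroid :: "'a set \<Rightarrow> 'a set set \<Rightarrow> bool" where
  "matroid E Ind \<longleftrightarrow> finite E \<and> Ind \<subseteq> Pow E \<and> {} \<in> Ind
     \<and> (\<forall>I J. J \<in> Ind \<longrightarrow> I \<subseteq> J \<longrightarrow> I \<in> Ind)
     \<and> (\<forall>I J. I \<in> Ind \<longrightarrow> J \<in> Ind \<longrightarrow> card I < card J
          \<longrightarrow> (\<exists>x\<in>J - I. insert x I \<in> Ind))"

definition rank_of :: "'a set set \<Rightarrow> 'a set \<Rightarrow> nat" where
  "rank_of Ind X = Max {card I | I. I \<in> Ind \<and> I \<subseteq> X}"

definition mdelete :: "'a set set \<Rightarrow> 'a \<Rightarrow> 'a set set" where
  "mdelete Ind i = {I \<in> Ind. i \<notin> I}"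

text \<open>Contraction of i (a matroid on E - {i}); contracting a loop equals deleting it.\<close>
definition mcontract :: "'a set set \<Rightarrow> 'a \<Rightarrow> 'a set set" where
  "mcontract Ind i = (if {i} \<in> Ind then {I. i \<notin> I \<and> insert i I \<in> Ind}
                      else {I \<in> Ind. i \<notin> I})"

definition zvec :: "'a set \<Rightarrow> ('a \<Rightarrow> int) \<Rightarrow> bool" where
  "zvec E \<alpha> \<longleftrightarrow> (\<forall>x. x \<notin> E \<longrightarrow> \<alpha> x = 0)"

definition unitv :: "'a \<Rightarrow> 'a \<Rightarrow> int" where
  "unitv i = (\<lambda>j. if j = i then 1 else 0)"

definition onev :: "'a set \<Rightarrow> 'a \<Rightarrow> int" where
  "onev E = (\<lambda>j. if j \<in> E then 1 else 0)"

definition supp :: "('a \<Rightarrow> int) \<Rightarrow> 'a set" where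
  "supp x = {i. x i \<noteq> 0}"

definition matroid_flock :: "'a set \<Rightarrow> nat \<Rightarrow> (('a \<Rightarrow> int) \<Rightarrow> 'a set set) \<Rightarrow> bool" where
  "matroid_flock E d M \<longleftrightarrow>
     (\<forall>\<alpha>. zvec E \<alpha> \<longrightarrow> matroid E (M \<alpha>) \<and> rank_of (M \<alpha>) E = d)
   \<and> (\<forall>\<alpha> i. zvec E \<alpha> \<longrightarrow> i \<in> E \<longrightarrow> mcontract (M \<alpha>) i = mdelete (M (\<lambda>j. \<alpha> j + unitv i j)) i)
   \<and> (\<forall>\<alpha>. zvec E \<alpha> \<longrightarrow> M \<alpha> = M (\<lambda>j. \<alpha> j + onev E j))"

end

theory Submission
  imports Defs
begin

text \<open>Raising the coordinate of some i outside I from \<alpha> i to \<alpha> i + 1 replaces (on subsets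
  of I) the contraction of i in M \<alpha> by the deletion of i in M (\<alpha> + e_i). Deletion does not
  change the rank of sets avoiding i, while contraction can only lower it, so the rank of I
  cannot go up. Iterating this unit step along a monotone lattice path from \<alpha> to \<beta>, which
  never touches a coordinate in I, gives the theorem.\<close>

lemma rank_of_mono_family:
  assumes "finite X" "{} \<in> F" "\<And>J. J \<in> F \<Longrightarrow> J \<subseteq> X \<Longrightarrow> J \<in> G"
  shows "rank_of F X \<le> rank_of G X"
proof -
  have "finite {card J | J. J \<in> G \<and> J \<subseteq> X}"
    by (rule finite_subset[of _ "{..card X}"]) (use assms(1) card_mono in fastforce)+
  moreover have "{card J | J. J \<in> F \<and> J \<subseteq> X} \<noteq> {}"
    using assms(2) by blast
  moreover have "{card J | J. J \<in> F \<and> J \<subseteq> X} \<subseteq> {card J | J. J \<in> G \<and> J \<subseteq> X}"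
    using assms(3) by blast
  ultimately show ?thesis
    unfolding rank_of_def using Max_mono by blast
qed

lemma rank_of_mdelete:
  assumes "i \<notin> X"
  shows "rank_of (mdelete Ind i) X = rank_of Ind X"
proof -
  have "{card J | J. J \<in> mdelete Ind i \<and> J \<subseteq> X} = {card J | J. J \<in> Ind \<and> J \<subseteq> X}"
    using assms unfolding mdelete_def by blast
  then show ?thesis
    unfolding rank_of_def by simp
qed

lemma rank_of_mcontract_le:
  assumes "matroid E Ind" "finite X"
  shows "rank_of (mcontract Ind i) X \<le> rank_of Ind X"
proof (rule rank_of_mono_family[OF assms(2)])
  show "{} \<in> mcontract Ind i"
    using assms(1) unfolding mcontract_def matroid_def by auto
  show "J \<in> Ind" if "J \<in> mcontract Ind i" for J
    using that assms(1) unfolding mcontract_def matroid_def by (auto split: if_splits)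
qed

lemma flock_rank_unit_step:
  assumes "finite E" "matroid_flock E d M" "zvec E \<alpha>" "i \<in> E" "I \<subseteq> E" "i \<notin> I"
  shows "rank_of (M (\<lambda>j. \<alpha> j + unitv i j)) I \<le> rank_of (M \<alpha>) I"
proof -
  have "matroid E (M \<alpha>)"
    using assms(2,3) unfolding matroid_flock_def by blast
  moreover have "finite I"
    using assms(1,5) finite_subset by blast
  moreover have "mcontract (M \<alpha>) i = mdelete (M (\<lambda>j. \<alpha> j + unitv i j)) i"
    using assms(2-4) unfolding matroid_flock_def by blast
  ultimately show ?thesis
    using rank_of_mcontract_le rank_of_mdelete[OF assms(6)] by metis
qed

lemma flock_rank_antimono:
  assumes "finite E" "matroid_flock E d M" "zvec E \<alpha>" "zvec E \<beta>" "I \<subseteq> E"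
    and "\<forall>i\<in>E. \<alpha> i \<le> \<beta> i" "\<forall>i\<in>I. \<alpha> i = \<beta> i"
  shows "rank_of (M \<beta>) I \<le> rank_of (M \<alpha>) I"
  using assms(4,6,7)
proof (induction "\<Sum>j\<in>E. nat (\<beta> j - \<alpha> j)" arbitrary: \<beta> rule: less_induct)
  case less
  show ?case
  proof (cases "\<forall>j\<in>E. \<alpha> j = \<beta> j")
    case True
    then have "\<beta> = \<alpha>"
      using \<open>zvec E \<beta>\<close> assms(3) unfolding zvec_def by (intro ext) (metis)
    then show ?thesis by simp
  next
    case False
    then obtain i where i: "i \<in> E" "\<alpha> i < \<beta> i"
      using less.prems(2) by force
    then have "i \<notin> I"
      using less.prems(3) by fastforce
    define \<beta>' where "\<beta>' = (\<lambda>j. \<beta> j - unitv i j)"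
    have "zvec E \<beta>'"
      using \<open>zvec E \<beta>\<close> i(1) unfolding zvec_def \<beta>'_def unitv_def by auto
    moreover have "\<forall>j\<in>E. \<alpha> j \<le> \<beta>' j" "\<forall>j\<in>I. \<alpha> j = \<beta>' j"
      using less.prems(2,3) i \<open>i \<notin> I\<close> unfolding \<beta>'_def unitv_def by auto
    moreover have "(\<Sum>j\<in>E. nat (\<beta>' j - \<alpha> j)) < (\<Sum>j\<in>E. nat (\<beta> j - \<alpha> j))"
      using assms(1) i unfolding \<beta>'_def unitv_def
      by (intro sum_strict_mono_ex1) auto
    ultimately have "rank_of (M \<beta>') I \<le> rank_of (M \<alpha>) I"
      using less.hyps by blast
    moreover have "\<beta> = (\<lambda>j. \<beta>' j + unitv i j)"
      by (simp add: \<beta>'_def)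
    ultimately show ?thesis
      using flock_rank_unit_step[OF assms(1,2) \<open>zvec E \<beta>'\<close> i(1) assms(5) \<open>i \<notin> I\<close>] by simp
  qed
qed

theorem mainTheorem10:
  fixes E :: "'a set" and d :: nat and M :: "('a \<Rightarrow> int) \<Rightarrow> 'a set set"
    and \<alpha> \<beta> :: "'a \<Rightarrow> int" and I :: "'a set"
  assumes "finite E"
    and "matroid_flock E d M"
    and "zvec E \<alpha>" and "zvec E \<beta>"
    and "I \<subseteq> E"
    and "I \<inter> supp (\<lambda>j. \<beta> j - \<alpha> j) = {}"
    and "\<forall>i\<in>E. \<alpha> i \<le> \<beta> i"
  shows "rank_of (M \<alpha>) I \<ge> rank_of (M \<beta>) I"
proof -
  have "\<forall>i\<in>I. \<alpha> i = \<beta> i"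
    using assms(6) unfolding supp_def by auto
  then show ?thesis
    using flock_rank_antimono[OF assms(1-5,7)] by simp
qed

end
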